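(* Let $t_0\in\mathbb{R}$, $q_0\ge 0$, $\mu>0$, $\alpha>0$, let $X:[t_0,+\infty)\to[0,+\infty)$ be continuous, and let $q$ be the solution of $$q'(t)=X(t)-\Big[\mu+e^{-\alpha q(t)}\big(\min\{\mu,X(t)\}-\mu\big)\Big],\qquad q(t_0)=q_0.$$ Define the exit time $\Lambda(t)=t+\dfrac{q(t)}{\mu}$. Then for all $t_0\le t<s$ we have $\Lambda(t)<\Lambda(s)$.
   Context: This ODE is the logistic queue model: $q$ is the queue size, $X$ the inflow, $\mu>0$ the maximum outflow rate and $\alpha>0$ a fixed model parameter. $\Lambda(t)$ is interpreted as the exit time of an entity arriving at time $t$. *)

theory Defs
  imports "HOL-Analysis.Analysis"
begin

definition exit_time :: "real \<Rightarrow> (real \<Rightarrow> real) \<Rightarrow> real \<Rightarrow> real" where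
  "exit_time \<mu> q t = t + q t / \<mu>"

end

theory Submission
  imports Defs
begin

text \<open>Writing \<open>q' = X - (\<mu> + e (min \<mu> X - \<mu>))\<close> with \<open>e = exp (-\<alpha> q) > 0\<close>, the exit time
  has derivative \<open>1 + q'/\<mu> = (X + e (\<mu> - min \<mu> X)) / \<mu>\<close>. For \<open>X > 0\<close> the numerator is at
  least \<open>X\<close>, and for \<open>X = 0\<close> it equals \<open>e \<mu>\<close>; either way it is positive, so the exit time is
  strictly increasing; the sign of \<open>q\<close>, the value of \<open>\<alpha>\<close> and the continuity of \<open>X\<close> play no role.\<close>

lemma logistic_queue_rate_gt_neg_outflow:
  fixes \<mu> X a :: real
  assumes "\<mu> > 0" and "X \<ge> 0"
  shows "X - (\<mu> + exp a * (min \<mu> X - \<mu>)) > - \<mu>"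
proof (cases "X > 0")
  case True
  have "exp a * (min \<mu> X - \<mu>) \<le> 0"
    by (intro mult_nonneg_nonpos) auto
  with True show ?thesis by linarith
next
  case False
  with assms show ?thesis by simp
qed

lemma exit_time_has_real_derivative:
  assumes "(q has_real_derivative d) (at t within S)"
  shows "(exit_time \<mu> q has_real_derivative 1 + d / \<mu>) (at t within S)"
  unfolding exit_time_def[abs_def]
  using DERIV_add[OF DERIV_ident DERIV_cdivide[OF assms, of \<mu>]] by simp

lemma DERIV_within_atLeast_pos_imp_less:
  fixes f f' :: "real \<Rightarrow> real"
  assumes deriv: "\<And>x. x \<ge> a \<Longrightarrow> (f has_real_derivative f' x) (at x within {a..})"
    and pos: "\<And>x. x > a \<Longrightarrow> f' x > 0"
    and "a \<le> t" "t < s"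
  shows "f t < f s"
proof (rule DERIV_pos_imp_increasing_open[OF \<open>t < s\<close>])
  fix x assume x: "t < x" "x < s"
  have "at x within {a..} = at x"
    by (rule at_within_open_subset[of x "{a<..}"]) (use x assms(3) in auto)
  with deriv[of x] pos[of x] x assms(3)
  show "\<exists>y. (f has_real_derivative y) (at x) \<and> y > 0"
    by auto
next
  have "continuous_on {a..} f"
    unfolding continuous_on_eq_continuous_within
    using deriv DERIV_continuous by (metis atLeast_iff)
  then show "continuous_on {t..s} f"
    by (rule continuous_on_subset) (use assms(3) in auto)
qed

theorem mainTheorem5:
  fixes t0 q0 \<mu> \<alpha> :: real and X q :: "real \<Rightarrow> real"
  assumes q0: "q0 \<ge> 0" and mu: "\<mu> > 0" and alpha: "\<alpha> > 0"
    and Xcont: "continuous_on {t0..} X"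
    and Xnonneg: "\<And>t. t \<ge> t0 \<Longrightarrow> X t \<ge> 0"
    and init: "q t0 = q0"
    and ode: "\<And>t. t \<ge> t0 \<Longrightarrow>
       (q has_real_derivative
          (X t - (\<mu> + exp (- \<alpha> * q t) * (min \<mu> (X t) - \<mu>)))) (at t within {t0..})"
    and ts: "t0 \<le> t" "t < s"
  shows "exit_time \<mu> q t < exit_time \<mu> q s"
proof (rule DERIV_within_atLeast_pos_imp_less[OF _ _ ts])
  let ?rate = "\<lambda>x. X x - (\<mu> + exp (- \<alpha> * q x) * (min \<mu> (X x) - \<mu>))"
  show "(exit_time \<mu> q has_real_derivative 1 + ?rate x / \<mu>) (at x within {t0..})"
    if "x \<ge> t0" for x
    using exit_time_has_real_derivative[OF ode[OF that]] .
  show "1 + ?rate x / \<mu> > 0" if "x > t0" for x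
  proof -
    have "?rate x > - \<mu>"
      using logistic_queue_rate_gt_neg_outflow[OF mu Xnonneg] that by simp
    with mu show ?thesis by (simp add: field_simps)
  qed
qed

end
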